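(* Let $n \ge m \ge 2$ and let $K_{n,m}$ be the complete bipartite graph with bipartition $(X,Y)$, $|X|=n$, $|Y|=m$. If $U$ is a strong edge geodetic set of $K_{n,m}$ with $Y \subseteq U$, then $|U| \ge n+1$.
   Context: All graphs are finite, simple and connected. A set $S \subseteq V(G)$ is a strong edge geodetic set of $G$ if one can assign to every unordered pair $\{u,v\}$ of distinct vertices of $S$ either one shortest $u,v$-path $P_{uv}$ in $G$ or no path, in such a way that every edge of $G$ lies on at least one of the assigned paths. *)

theory Defs
  imports Main
begin

text \<open>Simple graphs are given by a vertex set V and an adjacency relation E
  (symmetric, irreflexive). Paths/walks are nonempty vertex lists.\<close>

definition is_walk :: "'a set \<Rightarrow> ('a \<Rightarrow> 'a \<Rightarrow> bool) \<Rightarrow> 'a list \<Rightarrow> bool" where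
  "is_walk V E p \<longleftrightarrow> p \<noteq> [] \<and> set p \<subseteq> V \<and>
     (\<forall>i. Suc i < length p \<longrightarrow> E (p ! i) (p ! Suc i))"

definition is_path :: "'a set \<Rightarrow> ('a \<Rightarrow> 'a \<Rightarrow> bool) \<Rightarrow> 'a list \<Rightarrow> bool" where
  "is_path V E p \<longleftrightarrow> is_walk V E p \<and> distinct p"

definition shortest_path :: "'a set \<Rightarrow> ('a \<Rightarrow> 'a \<Rightarrow> bool) \<Rightarrow> 'a \<Rightarrow> 'a \<Rightarrow> 'a list \<Rightarrow> bool" where
  "shortest_path V E u v p \<longleftrightarrow> is_path V E p \<and> hd p = u \<and> last p = v \<and>
     (\<forall>q. is_walk V E q \<and> hd q = u \<and> last q = v \<longrightarrow> length p \<le> length q)"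

definition edge_on_path :: "'a \<Rightarrow> 'a \<Rightarrow> 'a list \<Rightarrow> bool" where
  "edge_on_path x y p \<longleftrightarrow> (\<exists>i. Suc i < length p \<and> {p ! i, p ! Suc i} = {x, y})"

text \<open>Strong edge geodetic set: an assignment of an optional shortest path to each
  unordered pair {u,v} of distinct vertices of S covering every edge.\<close>
definition strong_edge_geodetic :: "'a set \<Rightarrow> ('a \<Rightarrow> 'a \<Rightarrow> bool) \<Rightarrow> 'a set \<Rightarrow> bool" where
  "strong_edge_geodetic V E S \<longleftrightarrow> S \<subseteq> V \<and>
     (\<exists>P :: 'a set \<Rightarrow> 'a list option.
        (\<forall>u\<in>S. \<forall>v\<in>S. \<forall>p. u \<noteq> v \<and> P {u, v} = Some p \<longrightarrow>
             shortest_path V E u v p \<or> shortest_path V E v u p) \<and>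
        (\<forall>x\<in>V. \<forall>y\<in>V. E x y \<longrightarrow>
             (\<exists>u\<in>S. \<exists>v\<in>S. \<exists>p. u \<noteq> v \<and> P {u, v} = Some p \<and> edge_on_path x y p)))"

definition complete_bipartite_adj :: "'a set \<Rightarrow> 'a set \<Rightarrow> 'a \<Rightarrow> 'a \<Rightarrow> bool" where
  "complete_bipartite_adj X Y u v \<longleftrightarrow> (u \<in> X \<and> v \<in> Y) \<or> (u \<in> Y \<and> v \<in> X)"

end

theory Submission
  imports Defs "HOL-Library.Disjoint_Sets"
begin

text \<open>Any two vertices of \<open>K\<^sub>X\<^sub>,\<^sub>Y\<close> are at distance at most 2, so a shortest path
  has at most three vertices, and one with an interior vertex \<open>x \<in> X\<close> must be
  \<open>[u, x, v]\<close> with both ends in \<open>Y\<close>. Hence each vertex \<open>x \<in> X - U\<close> gets its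
  \<open>|Y|\<close> edges covered only by assigned paths joining two vertices of \<open>Y\<close>, each
  covering two of these edges, and distinct such \<open>x\<close> need distinct pairs. So
  \<open>|X - U| \<cdot> |Y| / 2 \<le> (|Y| choose 2)\<close>, i.e. \<open>|X - U| \<le> |Y| - 1\<close>, and
  \<open>|U| = |X \<inter> U| + |Y| \<ge> |X| + 1\<close>.\<close>

lemma card_mult_le_of_disjoint_pair_covers:
  fixes Y :: "'a set" and S :: "'b \<Rightarrow> 'a set set"
  assumes "finite Y" and "finite B"
    and pairs: "\<And>x. x \<in> B \<Longrightarrow> S x \<subseteq> {e. e \<subseteq> Y \<and> card e = 2}"
    and covers: "\<And>x. x \<in> B \<Longrightarrow> Y \<subseteq> \<Union> (S x)"
    and disj: "disjoint_family_on S B"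
  shows "card B * card Y \<le> card Y * (card Y - 1)"
proof -
  let ?Pairs = "{e. e \<subseteq> Y \<and> card e = 2}"
  have fin_pairs: "finite ?Pairs"
    using \<open>finite Y\<close> by simp
  have cover_bound: "card Y \<le> 2 * card (S x)" if "x \<in> B" for x
  proof -
    have "card Y \<le> card (\<Union> (S x))"
      using pairs[OF that] covers[OF that] \<open>finite Y\<close>
      by (intro card_mono) (auto intro: finite_subset)
    also have "\<dots> \<le> sum card (S x)"
      by (rule card_Union_le_sum_card)
    also have "\<dots> = 2 * card (S x)"
      using pairs[OF that] by (simp add: subset_iff)
    finally show ?thesis .
  qed
  have "(\<Sum>x\<in>B. card (S x)) = card (\<Union>x\<in>B. S x)"
    using disj pairs fin_pairs \<open>finite B\<close>
    by (intro card_UN_disjoint'[symmetric]) (auto intro: finite_subset)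
  also have "\<dots> \<le> card ?Pairs"
    using pairs fin_pairs by (intro card_mono) auto
  also have "\<dots> = card Y choose 2"
    using n_subsets[OF \<open>finite Y\<close>] by simp
  finally have sum_bound: "(\<Sum>x\<in>B. card (S x)) \<le> card Y choose 2" .
  have "card B * card Y = (\<Sum>x\<in>B. card Y)"
    by simp
  also have "\<dots> \<le> (\<Sum>x\<in>B. 2 * card (S x))"
    by (rule sum_mono) (rule cover_bound)
  also have "\<dots> \<le> 2 * (card Y choose 2)"
    using sum_bound by (simp add: sum_distrib_left[symmetric])
  also have "\<dots> \<le> card Y * (card Y - 1)"
    unfolding choose_two by simp
  finally show ?thesis .
qed

lemma edge_on_path_mem: "edge_on_path x y p \<Longrightarrow> x \<in> set p \<and> y \<in> set p"
  unfolding edge_on_path_def by (metis Suc_lessD doubleton_eq_iff nth_mem)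

lemma list_length_le_3_interior:
  assumes "p \<noteq> []" and "length p \<le> 3" and "x \<in> set p" and "x \<noteq> hd p" and "x \<noteq> last p"
  shows "p = [hd p, x, last p]"
proof -
  consider a where "p = [a]" | a b where "p = [a, b]" | a b c where "p = [a, b, c]"
    using assms(1,2)
    by (cases p; simp; rename_tac l; case_tac l; simp; rename_tac l'; case_tac l'; auto)
  then show ?thesis
    using assms(3-5) by cases auto
qed

lemma complete_bipartite_walk_length_le_3:
  assumes "a \<in> X" and "b \<in> Y" and "u \<in> X \<union> Y" and "v \<in> X \<union> Y"
  obtains q where "is_walk (X \<union> Y) (complete_bipartite_adj X Y) q"
    and "hd q = u" and "last q = v" and "length q \<le> 3"
proof -
  have walk3: "is_walk (X \<union> Y) (complete_bipartite_adj X Y) [u, w, v]"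
    if "complete_bipartite_adj X Y u w" "complete_bipartite_adj X Y w v" "w \<in> X \<union> Y" for w
    using that assms(3,4) by (auto simp: is_walk_def less_Suc_eq nth_Cons split: nat.splits)
  consider "u \<in> Y" "v \<in> Y" | "u \<in> X" "v \<in> X" | "complete_bipartite_adj X Y u v"
    using assms(3,4) by (auto simp: complete_bipartite_adj_def)
  then show ?thesis
  proof cases
    case 1
    then have "complete_bipartite_adj X Y u a" "complete_bipartite_adj X Y a v"
      using assms(1) by (auto simp: complete_bipartite_adj_def)
    then show ?thesis
      using walk3[of a] assms(1) that[of "[u, a, v]"] by simp
  next
    case 2
    then have "complete_bipartite_adj X Y u b" "complete_bipartite_adj X Y b v"
      using assms(2) by (auto simp: complete_bipartite_adj_def)
    then show ?thesis
      using walk3[of b] assms(2) that[of "[u, b, v]"] by simp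
  next
    case 3
    then show ?thesis
      using assms(3,4) that[of "[u, v]"] by (simp add: is_walk_def)
  qed
qed

lemma shortest_path_complete_bipartite_via_part:
  assumes "X \<inter> Y = {}" and "Y \<noteq> {}"
    and sp: "shortest_path (X \<union> Y) (complete_bipartite_adj X Y) u v p"
    and "x \<in> set p" and "x \<in> X" and "x \<noteq> u" and "x \<noteq> v"
  shows "p = [u, x, v] \<and> u \<in> Y \<and> v \<in> Y"
proof -
  let ?E = "complete_bipartite_adj X Y"
  have walk: "is_walk (X \<union> Y) ?E p" and ends: "hd p = u" "last p = v"
    using sp by (auto simp: shortest_path_def is_path_def)
  have "p \<noteq> []" "set p \<subseteq> X \<union> Y"
    using walk by (simp_all add: is_walk_def)
  then have "u \<in> X \<union> Y" "v \<in> X \<union> Y"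
    using ends hd_in_set last_in_set by blast+
  moreover obtain b where "b \<in> Y"
    using \<open>Y \<noteq> {}\<close> by blast
  ultimately obtain q where q: "is_walk (X \<union> Y) ?E q" "hd q = u" "last q = v" "length q \<le> 3"
    using complete_bipartite_walk_length_le_3 \<open>x \<in> X\<close> by metis
  have "length p \<le> length q"
    using sp q(1-3) unfolding shortest_path_def by blast
  then have "length p \<le> 3"
    using q(4) by linarith
  then have p: "p = [u, x, v]"
    using list_length_le_3_interior[of p x] \<open>p \<noteq> []\<close> ends assms(4,6,7) by simp
  have "?E u x" "?E x v"
    using walk unfolding p is_walk_def by (auto dest: spec[of _ 0] spec[of _ 1])
  then show ?thesis
    using p \<open>x \<in> X\<close> assms(1) by (auto simp: complete_bipartite_adj_def)
qed

lemma strong_edge_geodetic_complete_bipartite_outside_card: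
  assumes "finite X" and "finite Y" and "X \<inter> Y = {}"
    and "strong_edge_geodetic (X \<union> Y) (complete_bipartite_adj X Y) U"
  shows "card (X - U) * card Y \<le> card Y * (card Y - 1)"
proof (cases "Y = {}")
  case False
  let ?E = "complete_bipartite_adj X Y"
  obtain P where
    geodesic: "\<And>u v p. \<lbrakk>u \<in> U; v \<in> U; u \<noteq> v; P {u, v} = Some p\<rbrakk> \<Longrightarrow>
      shortest_path (X \<union> Y) ?E u v p \<or> shortest_path (X \<union> Y) ?E v u p" and
    cover: "\<And>x y. \<lbrakk>x \<in> X \<union> Y; y \<in> X \<union> Y; ?E x y\<rbrakk> \<Longrightarrow>
      \<exists>u\<in>U. \<exists>v\<in>U. \<exists>p. u \<noteq> v \<and> P {u, v} = Some p \<and> edge_on_path x y p"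
    using assms(4) unfolding strong_edge_geodetic_def by metis
  have via: "set p = {u, x, v} \<and> u \<in> Y \<and> v \<in> Y"
    if "u \<in> U" "v \<in> U" "u \<noteq> v" "P {u, v} = Some p" "x \<in> set p" "x \<in> X - U" for u v p x
  proof -
    have "x \<in> X" "x \<noteq> u" "x \<noteq> v"
      using that by auto
    then show ?thesis
      using geodesic[OF that(1-4)] that(5)
        shortest_path_complete_bipartite_via_part[OF assms(3) False, of u v p x]
        shortest_path_complete_bipartite_via_part[OF assms(3) False, of v u p x]
      by auto
  qed
  define S where "S x = {{u, v} | u v. u \<in> U \<and> v \<in> U \<and> u \<noteq> v \<and>
    (\<exists>p. P {u, v} = Some p \<and> x \<in> set p)}" for x
  show ?thesis
  proof (rule card_mult_le_of_disjoint_pair_covers)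
    show "S x \<subseteq> {e. e \<subseteq> Y \<and> card e = 2}" if "x \<in> X - U" for x
      using via that unfolding S_def by fastforce
    show "Y \<subseteq> \<Union> (S x)" if x: "x \<in> X - U" for x
    proof
      fix y assume "y \<in> Y"
      then have "?E x y" "y \<noteq> x"
        using x assms(3) by (auto simp: complete_bipartite_adj_def)
      then obtain u v p where uvp: "u \<in> U" "v \<in> U" "u \<noteq> v" "P {u, v} = Some p"
        "edge_on_path x y p"
        using cover x \<open>y \<in> Y\<close> by blast
      have "x \<in> set p" "y \<in> set p"
        using edge_on_path_mem[OF uvp(5)] by auto
      then have "y \<in> {u, v}" "{u, v} \<in> S x"
        using via[OF uvp(1-4) _ x] uvp \<open>y \<noteq> x\<close> unfolding S_def by blast+
      then show "y \<in> \<Union> (S x)" by blast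
    qed
    show "disjoint_family_on S (X - U)"
      unfolding disjoint_family_on_def
    proof (intro ballI impI, rule ccontr)
      fix i j assume ij: "i \<in> X - U" "j \<in> X - U" "i \<noteq> j" "S i \<inter> S j \<noteq> {}"
      then obtain e where "e \<in> S i" "e \<in> S j"
        by blast
      then obtain u v p p' where "u \<in> U" "v \<in> U" "u \<noteq> v" "e = {u, v}"
        "P e = Some p" "i \<in> set p" "P e = Some p'" "j \<in> set p'"
        unfolding S_def by auto
      then have "u \<in> U" "v \<in> U" "u \<noteq> v" "P {u, v} = Some p" "i \<in> set p" "j \<in> set p"
        by auto
      then show False
        using via[of u v p i] ij by auto
    qed
  qed (use assms in simp_all)
qed simp

theorem mainTheorem3:
  fixes X Y U :: "'a set" and n m :: nat
  assumes "finite X" and "finite Y" and "X \<inter> Y = {}"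
    and "card X = n" and "card Y = m" and "n \<ge> m" and "m \<ge> 2"
    and "strong_edge_geodetic (X \<union> Y) (complete_bipartite_adj X Y) U"
    and "Y \<subseteq> U"
  shows "card U \<ge> n + 1"
proof -
  have "card (X - U) * m \<le> (m - 1) * m"
    using strong_edge_geodetic_complete_bipartite_outside_card[OF assms(1-3,8)] assms(5)
    by (simp add: mult.commute)
  then have outside: "card (X - U) \<le> m - 1"
    using assms(7) by simp
  have "U \<subseteq> X \<union> Y"
    using assms(8) by (simp add: strong_edge_geodetic_def)
  then have "U = (X \<inter> U) \<union> Y"
    using assms(9) by auto
  then have "card U = card (X \<inter> U) + m"
    using assms(1-3,5) card_Un_disjoint[of "X \<inter> U" Y] by auto
  moreover have "card X = card (X \<inter> U) + card (X - U)"
    using assms(1) card_Int_Diff by blast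
  ultimately show ?thesis
    using outside assms(4,7) by linarith
qed

end
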